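(* Let $N$ be a positive integer, $h:=1/N$, $t_j:=jh$, and $e_n(t):=\exp(2\pi i n t)$. Then for every integer $n$ with $|n|\le N-1$ and every $t\in\mathbb R$ with $t/h\notin\mathbb Z$, \[ h\sum_{j=1}^{N}\cot(\pi(t-t_j))\,e_n(t_j)=\mathrm{p.v.}\int_0^1\cot(\pi(t-\tau))\,e_n(\tau)\,\mathrm d\tau+\cot(\pi t/h)\,e_n(t). \]
   Context: p.v. denotes the Cauchy principal value integral. *)

theory Defs
  imports "HOL-Analysis.Analysis"
begin

definition en :: "int \<Rightarrow> real \<Rightarrow> complex" where
  "en n t = exp (2 * of_real pi * \<i> * of_int n * of_real t)"

text \<open>Truncated integral for the Cauchy principal value of
  int_0^1 cot(pi(t - tau)) f(tau) dtau: the eps-neighbourhoods of all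
  singular points tau (those with t - tau an integer) are removed from [0,1].\<close>
definition pv_cot_trunc :: "real \<Rightarrow> (real \<Rightarrow> complex) \<Rightarrow> real \<Rightarrow> complex" where
  "pv_cot_trunc t f \<epsilon> =
     integral {\<tau> \<in> {0..1}. \<forall>k::int. \<epsilon> \<le> \<bar>t - \<tau> - of_int k\<bar>}
       (\<lambda>\<tau>. of_real (cot (pi * (t - \<tau>))) * f \<tau>)"

definition has_pv_cot_integral :: "real \<Rightarrow> (real \<Rightarrow> complex) \<Rightarrow> complex \<Rightarrow> bool" where
  "has_pv_cot_integral t f I \<longleftrightarrow> (pv_cot_trunc t f \<longlongrightarrow> I) (at_right 0)"

end

theory Submission
  imports Defs
begin

text \<open>With \<open>z = e\<^sub>1(x)\<close> and \<open>w = e\<^sub>1(t)\<close>, the product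
  \<open>cot (\<pi>(t - x)) (e\<^sub>n(x) - e\<^sub>n(t)) = -\<i> (w + z) (z\<^sup>n - w\<^sup>n) / (z - w)\<close> is a
  trigonometric polynomial \<open>T\<close> with frequencies in \<open>(-N, N)\<close>, so the \<open>N\<close>-point rectangle
  rule integrates it exactly. The principal value is therefore \<open>\<integral>T + e\<^sub>n(t) p.v.\<integral>cot (\<pi>(t - \<tau>)) d\<tau>\<close>,
  and the last principal value vanishes because the primitive \<open>-ln (sin\<^sup>2 (\<pi>(t - \<tau>))) / (2\<pi>)\<close>
  is 1-periodic and symmetric about the singularity. On the discrete side the same decomposition,
  together with \<open>\<Sum>\<^sub>j cot (\<pi>(t - j/N)) = N cot (\<pi>N t)\<close>, produces the correction term.\<close>

lemma en_add: "en (k + l) x = en k x * en l x"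
  unfolding en_def by (simp add: exp_add[symmetric] algebra_simps)

lemma en_0 [simp]: "en 0 x = 1"
  unfolding en_def by simp

lemma en_of_nat_eq_power: "en (int m) x = en 1 x ^ m"
  unfolding en_def by (simp add: exp_of_nat_mult[symmetric] algebra_simps)

lemma en_of_nat_mult: "en k (of_nat m * x) = en k x ^ m"
  unfolding en_def by (simp add: exp_of_nat_mult[symmetric] algebra_simps)

lemma en_eq_1_iff: "en k x = 1 \<longleftrightarrow> of_int k * x \<in> \<int>"
proof -
  have "en k x = 1 \<longleftrightarrow> (\<exists>m::int. 2 * pi * (of_int k * x) = of_int (2 * m) * pi)"
    unfolding en_def exp_eq_1 by (simp add: mult_ac)
  also have "\<dots> \<longleftrightarrow> (\<exists>m::int. of_int k * x = of_int m)"
    by (simp add: algebra_simps)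
  finally show ?thesis by (auto elim!: Ints_cases)
qed

lemma en_of_int [simp]: "en k (of_int m) = 1"
  by (simp add: en_eq_1_iff)

lemma en_at_0 [simp]: "en k 0 = 1"
  using en_of_int[of k 0] by simp

lemma en_1 [simp]: "en k 1 = 1"
  using en_of_int[of k 1] by simp

lemma has_vector_derivative_en:
  "(en k has_vector_derivative (2 * of_real pi * \<i> * of_int k * en k x)) (at x within S)"
proof -
  have "((\<lambda>z. exp (2 * of_real pi * \<i> * of_int k * z)) has_field_derivative
         2 * of_real pi * \<i> * of_int k * exp (2 * of_real pi * \<i> * of_int k * of_real x)) (at (of_real x))"
    by (auto intro!: derivative_eq_intros)
  from has_vector_derivative_real_field[OF this] show ?thesis
    unfolding en_def by simp
qed

lemma has_integral_en: "(en k has_integral (if k = 0 then 1 else 0)) {0..1}"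
proof (cases "k = 0")
  case True
  have "en 0 = (\<lambda>_. 1)" by (rule ext) simp
  then show ?thesis using True has_integral_const_real[of "1::complex" 0 1] by simp
next
  case False
  define c where "c = 2 * of_real pi * \<i> * of_int k"
  have "((\<lambda>x. c * en k x) has_integral en k 1 - en k 0) {0..1}"
    by (rule fundamental_theorem_of_calculus) (auto simp: c_def intro!: has_vector_derivative_en)
  then have "((\<lambda>x. c * en k x) has_integral 0) {0..1}"
    by simp
  moreover have "c \<noteq> 0"
    using False by (simp add: c_def)
  ultimately show ?thesis
    using False has_integral_mult_right[of "\<lambda>x. c * en k x" 0 "{0..1}" "inverse c"]
    by (simp add: mult.assoc[symmetric])
qed

lemma sum_en_roots_of_unity:
  assumes N: "N > 0" and k: "\<bar>k\<bar> < int N"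
  shows "(\<Sum>j=1..N. en k (real j / real N)) = (if k = 0 then of_nat N else 0)"
proof (cases "k = 0")
  case False
  define w where "w = en k (1 / real N)"
  have powers: "en k (real j / real N) = w ^ j" for j
    using en_of_nat_mult[of k j "1 / real N"] by (simp add: w_def)
  have "w ^ N = 1"
    using powers[of N] N by simp
  moreover have "w \<noteq> 1"
  proof
    assume "w = 1"
    then have "of_int k / real N \<in> \<int>"
      by (simp add: w_def en_eq_1_iff)
    moreover have "\<bar>of_int k / real N\<bar> < 1"
      using k N by (simp add: divide_less_eq)
    ultimately have "of_int k / real N = 0"
      by (rule Ints_nonzero_abs_less1)
    then show False
      using False N by simp
  qed
  moreover have "(1 - w) * (\<Sum>j=1..N. w ^ j) = w ^ 1 - w ^ Suc N"
    using N by (intro sum_gp_multiplied) simp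
  ultimately show ?thesis
    using False by (simp add: powers)
qed simp

definition rectangle_rule_exact :: "nat \<Rightarrow> (real \<Rightarrow> complex) \<Rightarrow> bool" where
  "rectangle_rule_exact N f \<longleftrightarrow>
     (f has_integral of_real (1 / real N) * (\<Sum>j=1..N. f (real j / real N))) {0..1}"

lemma rectangle_rule_exact_en:
  assumes "N > 0" and "\<bar>k\<bar> < int N"
  shows "rectangle_rule_exact N (en k)"
  using has_integral_en[of k] assms
  unfolding rectangle_rule_exact_def sum_en_roots_of_unity[OF assms] by (cases "k = 0") simp_all

lemma rectangle_rule_exact_add:
  "rectangle_rule_exact N f \<Longrightarrow> rectangle_rule_exact N g \<Longrightarrow> rectangle_rule_exact N (\<lambda>x. f x + g x)"
  unfolding rectangle_rule_exact_def by (auto simp: sum.distrib distrib_left intro: has_integral_add)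

lemma rectangle_rule_exact_diff:
  "rectangle_rule_exact N f \<Longrightarrow> rectangle_rule_exact N g \<Longrightarrow> rectangle_rule_exact N (\<lambda>x. f x - g x)"
  unfolding rectangle_rule_exact_def by (auto simp: sum_subtractf right_diff_distrib intro: has_integral_diff)

lemma rectangle_rule_exact_cmult:
  "rectangle_rule_exact N f \<Longrightarrow> rectangle_rule_exact N (\<lambda>x. c * f x)"
  unfolding rectangle_rule_exact_def
  by (drule has_integral_mult_right[of _ _ _ c]) (simp add: sum_distrib_left mult_ac)

lemma rectangle_rule_exact_sum:
  "finite A \<Longrightarrow> (\<And>i. i \<in> A \<Longrightarrow> rectangle_rule_exact N (f i)) \<Longrightarrow>
     rectangle_rule_exact N (\<lambda>x. \<Sum>i\<in>A. f i x)"
proof (induction A rule: finite_induct)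
  case empty
  then show ?case unfolding rectangle_rule_exact_def by simp
next
  case (insert a A)
  then show ?case by (simp add: rectangle_rule_exact_add)
qed

lemma sum_int_telescope:
  fixes f :: "int \<Rightarrow> 'a::ab_group_add"
  assumes "m \<le> n"
  shows "(\<Sum>j\<in>{m..<n}. f (j + 1) - f j) = f n - f m"
  using assms
proof (induction n rule: int_ge_induct)
  case (step n)
  then have "{m..<n + 1} = insert n {m..<n}" by auto
  with step show ?case by simp
qed simp

text \<open>This is \<open>(z\<^sup>n - w\<^sup>n) / (z - w)\<close> for \<open>z = e\<^sub>1(x)\<close> and \<open>w = e\<^sub>1(t)\<close>;
  one of the two sums is always empty, depending on the sign of \<open>n\<close>.\<close>
definition en_divided_difference :: "int \<Rightarrow> real \<Rightarrow> real \<Rightarrow> complex" where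
  "en_divided_difference n t x =
     (\<Sum>j\<in>{0..<n}. en (n - 1 - j) t * en j x) - (\<Sum>j\<in>{n..<0}. en (n - 1 - j) t * en j x)"

lemma en_diff_eq_divided_difference:
  "en n x - en n t = (en 1 x - en 1 t) * en_divided_difference n t x"
proof -
  define a where "a j = en (n - j) t * en j x" for j
  have step: "(en 1 x - en 1 t) * (en (n - 1 - j) t * en j x) = a (j + 1) - a j" for j
    unfolding a_def by (simp add: algebra_simps en_add[symmetric])
  have "(en 1 x - en 1 t) * en_divided_difference n t x
      = (\<Sum>j\<in>{0..<n}. a (j + 1) - a j) - (\<Sum>j\<in>{n..<0}. a (j + 1) - a j)"
    unfolding en_divided_difference_def by (simp add: right_diff_distrib sum_distrib_left step)
  also have "\<dots> = a n - a 0"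
    by (cases "0 \<le> n") (simp_all add: sum_int_telescope)
  finally show ?thesis
    by (simp add: a_def)
qed

lemma rectangle_rule_exact_en_mult_sum:
  assumes "N > 0" and "finite A" and "\<And>j. j \<in> A \<Longrightarrow> \<bar>j\<bar> < int N \<and> \<bar>j + 1\<bar> < int N"
  shows "rectangle_rule_exact N (\<lambda>x. (w + en 1 x) * (\<Sum>j\<in>A. c j * en j x))"
proof -
  have "(w + en 1 x) * (\<Sum>j\<in>A. c j * en j x) = (\<Sum>j\<in>A. (w * c j) * en j x + c j * en (j + 1) x)" for x
    by (simp add: sum_distrib_left algebra_simps en_add)
  moreover have "rectangle_rule_exact N (\<lambda>x. \<Sum>j\<in>A. (w * c j) * en j x + c j * en (j + 1) x)"
    using assms
    by (intro rectangle_rule_exact_sum rectangle_rule_exact_add rectangle_rule_exact_cmult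
          rectangle_rule_exact_en) auto
  ultimately show ?thesis
    by simp
qed

lemma cot_mult_en_diff:
  assumes "sin (pi * (t - x)) \<noteq> 0"
  shows "of_real (cot (pi * (t - x))) * (en 1 x - en 1 t) = - \<i> * (en 1 t + en 1 x)"
proof -
  define \<theta> where "\<theta> = pi * (t - x)"
  define u where "u = exp (\<i> * of_real (pi * (t + x)))"
  have cis: "cis y = of_real (cos y) + \<i> * of_real (sin y)" for y
    by (simp add: complex_eq_iff)
  have et: "en 1 t = u * cis \<theta>"
  proof -
    have "2 * of_real pi * \<i> * of_int 1 * of_real t = \<i> * of_real (pi * (t + x)) + \<i> * of_real \<theta>"
      by (simp add: \<theta>_def algebra_simps)
    then show ?thesis unfolding en_def u_def cis_conv_exp by (simp only: exp_add)
  qed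
  have ex: "en 1 x = u * cis (- \<theta>)"
  proof -
    have "2 * of_real pi * \<i> * of_int 1 * of_real x = \<i> * of_real (pi * (t + x)) + \<i> * of_real (- \<theta>)"
      by (simp add: \<theta>_def algebra_simps)
    then show ?thesis unfolding en_def u_def cis_conv_exp by (simp only: exp_add)
  qed
  have "cot \<theta> * sin \<theta> = cos \<theta>"
    using assms by (simp add: \<theta>_def cot_def)
  then have cot: "of_real (cot \<theta>) * of_real (sin \<theta>) = (of_real (cos \<theta>) :: complex)"
    by (metis of_real_mult)
  have "of_real (cot \<theta>) * (en 1 x - en 1 t) = u * (-2 * \<i>) * (of_real (cot \<theta>) * of_real (sin \<theta>))"
    unfolding et ex cis by (simp add: algebra_simps)
  also have "\<dots> = - \<i> * (en 1 t + en 1 x)"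
    unfolding cot et ex cis by (simp add: algebra_simps)
  finally show ?thesis
    by (simp add: \<theta>_def)
qed

text \<open>The continuous extension of \<open>cot (\<pi>(t - x)) (e\<^sub>n(x) - e\<^sub>n(t))\<close> across its removable
  singularities.\<close>
definition cot_en_regularized :: "int \<Rightarrow> real \<Rightarrow> real \<Rightarrow> complex" where
  "cot_en_regularized n t x = - \<i> * (en 1 t + en 1 x) * en_divided_difference n t x"

lemma cot_mult_en_diff_eq_regularized:
  assumes "sin (pi * (t - x)) \<noteq> 0"
  shows "of_real (cot (pi * (t - x))) * (en n x - en n t) = cot_en_regularized n t x"
proof -
  have "of_real (cot (pi * (t - x))) * (en n x - en n t)
      = of_real (cot (pi * (t - x))) * (en 1 x - en 1 t) * en_divided_difference n t x"
    by (subst en_diff_eq_divided_difference) (simp only: mult.assoc)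
  then show ?thesis
    by (simp add: cot_mult_en_diff[OF assms] cot_en_regularized_def)
qed

lemma rectangle_rule_exact_cot_en_regularized:
  assumes "N > 0" and "\<bar>n\<bar> \<le> int N - 1"
  shows "rectangle_rule_exact N (cot_en_regularized n t)"
proof -
  let ?c = "\<lambda>j. en (n - 1 - j) t"
  have "rectangle_rule_exact N (\<lambda>x. - \<i> * ((en 1 t + en 1 x) * (\<Sum>j\<in>{0..<n}. ?c j * en j x)
          - (en 1 t + en 1 x) * (\<Sum>j\<in>{n..<0}. ?c j * en j x)))"
    using assms
    by (intro rectangle_rule_exact_cmult rectangle_rule_exact_diff rectangle_rule_exact_en_mult_sum) auto
  moreover have "cot_en_regularized n t = (\<lambda>x. - \<i> * ((en 1 t + en 1 x) * (\<Sum>j\<in>{0..<n}. ?c j * en j x)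
          - (en 1 t + en 1 x) * (\<Sum>j\<in>{n..<0}. ?c j * en j x)))"
    unfolding cot_en_regularized_def en_divided_difference_def by (simp add: right_diff_distrib fun_eq_iff)
  ultimately show ?thesis
    by simp
qed

lemma cot_pi_diff_eq_en:
  assumes "sin (pi * (t - x)) \<noteq> 0"
  shows "of_real (cot (pi * (t - x))) = - \<i> + 2 * \<i> * en 1 t / (en 1 t - en 1 x)"
proof -
  have en_nonzero: "en 1 t \<noteq> 0"
    by (simp add: en_def)
  have "en 1 x - en 1 t \<noteq> 0"
    using cot_mult_en_diff[OF assms] en_nonzero by auto
  with cot_mult_en_diff[OF assms] show ?thesis
    by (simp add: field_simps)
qed

lemma sum_power_en_roots_of_unity:
  assumes "N > 0" and "m < N"
  shows "(\<Sum>j=1..N. en 1 (real j / real N) ^ m) = (if m = 0 then of_nat N else 0)"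
  using sum_en_roots_of_unity[of N "int m"] assms by (simp add: en_of_nat_eq_power)

lemma sum_inverse_diff_en_roots_of_unity:
  fixes z :: complex
  assumes N: "N > 0" and z: "z ^ N \<noteq> 1"
  shows "(\<Sum>j=1..N. 1 / (z - en 1 (real j / real N))) = of_nat N * z ^ (N - 1) / (z ^ N - 1)"
proof -
  let ?w = "\<lambda>j. en 1 (real j / real N)"
  have root: "?w j ^ N = 1" for j
    using en_of_nat_mult[of 1 N "real j / real N"] en_of_int[of 1 "int j"] N by simp
  have inverse: "1 / (z - ?w j) = (\<Sum>i<N. ?w j ^ (N - Suc i) * z ^ i) / (z ^ N - 1)" for j
  proof -
    have factor: "z ^ N - 1 = (z - ?w j) * (\<Sum>i<N. ?w j ^ (N - Suc i) * z ^ i)"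
      using power_diff_sumr2[of z N "?w j"] root[of j] by simp
    with z have "z - ?w j \<noteq> 0" "(\<Sum>i<N. ?w j ^ (N - Suc i) * z ^ i) \<noteq> 0"
      by auto
    with z show ?thesis
      by (simp add: factor field_simps)
  qed
  have "(\<Sum>j=1..N. 1 / (z - ?w j)) = (\<Sum>j=1..N. \<Sum>i<N. ?w j ^ (N - Suc i) * z ^ i) / (z ^ N - 1)"
    by (simp add: inverse sum_divide_distrib)
  also have "(\<Sum>j=1..N. \<Sum>i<N. ?w j ^ (N - Suc i) * z ^ i) = (\<Sum>i<N. (\<Sum>j=1..N. ?w j ^ (N - Suc i)) * z ^ i)"
    by (subst sum.swap) (simp add: sum_distrib_right)
  also have "(\<Sum>i<N. (\<Sum>j=1..N. ?w j ^ (N - Suc i)) * z ^ i) = (\<Sum>i<N. if i = N - 1 then of_nat N * z ^ i else 0)"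
  proof (intro sum.cong refl)
    fix i assume "i \<in> {..<N}"
    then show "(\<Sum>j=1..N. ?w j ^ (N - Suc i)) * z ^ i = (if i = N - 1 then of_nat N * z ^ i else 0)"
      using sum_power_en_roots_of_unity[OF N, of "N - Suc i"] N by auto
  qed
  also have "\<dots> = of_nat N * z ^ (N - 1)"
    using N by simp
  finally show ?thesis .
qed

lemma sin_pi_eq_0_iff: "sin (pi * y) = 0 \<longleftrightarrow> y \<in> \<int>"
  using sin_times_pi_eq_0[of y] by (simp add: mult.commute)

lemma sin_pi_diff_grid_nonzero:
  assumes "t * real N \<notin> \<int>"
  shows "sin (pi * (t - real j / real N)) \<noteq> 0"
proof
  assume "sin (pi * (t - real j / real N)) = 0"
  then have "(t - real j / real N) * real N + real j \<in> \<int>"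
    by (auto simp: sin_pi_eq_0_iff)
  moreover have "(t - real j / real N) * real N + real j = t * real N" if "N > 0"
    using that by (simp add: field_simps)
  ultimately show False
    using assms by (cases "N = 0") auto
qed

lemma sum_cot_shifts:
  assumes N: "N > 0" and t: "t * real N \<notin> \<int>"
  shows "(\<Sum>j=1..N. cot (pi * (t - real j / real N))) = real N * cot (pi * t * real N)"
proof -
  define z where "z = en 1 t"
  have zN: "z ^ N = en 1 (t * real N)"
    using en_of_nat_mult[of 1 N t] by (simp add: z_def mult.commute)
  have zN_not_1: "z ^ N \<noteq> 1"
    using t by (simp add: zN en_eq_1_iff)
  have "(\<Sum>j=1..N. of_real (cot (pi * (t - real j / real N))))
      = (\<Sum>j=1..N. - \<i> + 2 * \<i> * z * (1 / (z - en 1 (real j / real N))))"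
    by (intro sum.cong) (simp_all add: cot_pi_diff_eq_en[OF sin_pi_diff_grid_nonzero[OF t]] z_def)
  also have "\<dots> = - \<i> * of_nat N + 2 * \<i> * z * (\<Sum>j=1..N. 1 / (z - en 1 (real j / real N)))"
    by (simp add: sum.distrib sum_subtractf sum_distrib_left)
  also have "\<dots> = - \<i> * of_nat N + 2 * \<i> * of_nat N * (z * z ^ (N - 1)) / (z ^ N - 1)"
    unfolding sum_inverse_diff_en_roots_of_unity[OF N zN_not_1] by simp
  also have "z * z ^ (N - 1) = z ^ N"
    using N by (simp add: power_eq_if[of z N])
  also have "- \<i> * of_nat N + 2 * \<i> * of_nat N * z ^ N / (z ^ N - 1)
      = of_nat N * (- \<i> + 2 * \<i> * z ^ N / (z ^ N - en 1 0))"
    by (simp add: algebra_simps)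
  also have "\<dots> = of_nat N * of_real (cot (pi * (t * real N - 0)))"
    using t unfolding zN by (subst cot_pi_diff_eq_en) (simp_all add: sin_pi_eq_0_iff)
  finally have "(of_real (\<Sum>j=1..N. cot (pi * (t - real j / real N))) :: complex)
      = of_real (real N * cot (pi * t * real N))"
    by (simp add: mult.assoc)
  then show ?thesis
    by (simp only: of_real_eq_iff)
qed

lemma sum_cot_grid_mult_en:
  assumes "N > 0" and "t * real N \<notin> \<int>"
  shows "(\<Sum>j=1..N. of_real (cot (pi * (t - real j / real N))) * en n (real j / real N))
       = (\<Sum>j=1..N. cot_en_regularized n t (real j / real N)) + of_real (real N * cot (pi * t * real N)) * en n t"
proof -
  have "(\<Sum>j=1..N. of_real (cot (pi * (t - real j / real N))) * en n (real j / real N))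
      = (\<Sum>j=1..N. cot_en_regularized n t (real j / real N) + en n t * of_real (cot (pi * (t - real j / real N))))"
    using cot_mult_en_diff_eq_regularized[OF sin_pi_diff_grid_nonzero[OF assms(2)]]
    by (intro sum.cong refl) (simp add: algebra_simps)
  also have "\<dots> = (\<Sum>j=1..N. cot_en_regularized n t (real j / real N)) + en n t * of_real (real N * cot (pi * t * real N))"
    by (simp add: sum.distrib flip: sum_distrib_left sum_cot_shifts[OF assms])
  finally show ?thesis
    by (simp add: mult.commute)
qed

lemma sin_pi_add_int_squared:
  assumes "k \<in> \<int>"
  shows "(sin (pi * (k + y)))\<^sup>2 = (sin (pi * y))\<^sup>2"
proof -
  have "sin (pi * k) = 0"
    using assms by (simp add: sin_pi_eq_0_iff)
  then have "(cos (pi * k))\<^sup>2 = 1"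
    using sin_cos_squared_add[of "pi * k"] by simp
  moreover have "sin (pi * (k + y)) = cos (pi * k) * sin (pi * y)"
    using \<open>sin (pi * k) = 0\<close> by (simp add: distrib_left sin_add)
  ultimately show ?thesis
    by (simp add: power_mult_distrib)
qed

definition cot_primitive :: "real \<Rightarrow> real \<Rightarrow> real" where
  "cot_primitive t x = - ln ((sin (pi * (t - x)))\<^sup>2) / (2 * pi)"

lemma has_real_derivative_cot_primitive:
  assumes "sin (pi * (t - x)) \<noteq> 0"
  shows "(cot_primitive t has_real_derivative cot (pi * (t - x))) (at x within S)"
proof -
  let ?s = "sin (pi * (t - x))" and ?c = "cos (pi * (t - x))"
  have "((\<lambda>x. (sin (pi * (t - x)))\<^sup>2) has_real_derivative - 2 * pi * ?s * ?c) (at x within S)"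
    by (auto intro!: derivative_eq_intros)
  then have "((\<lambda>x. ln ((sin (pi * (t - x)))\<^sup>2)) has_real_derivative - 2 * pi * ?s * ?c / ?s\<^sup>2) (at x within S)"
    using assms by (auto intro!: derivative_eq_intros)
  then have "(cot_primitive t has_real_derivative - (- 2 * pi * ?s * ?c / ?s\<^sup>2) / (2 * pi)) (at x within S)"
    using assms unfolding cot_primitive_def by (auto intro!: derivative_eq_intros)
  moreover have "- (- 2 * pi * ?s * ?c / ?s\<^sup>2) / (2 * pi) = cot (pi * (t - x))"
    using assms by (simp add: cot_def power2_eq_square)
  ultimately show ?thesis
    by simp
qed

lemma has_integral_cot:
  assumes "u \<le> v" and "\<And>x. x \<in> {u..v} \<Longrightarrow> sin (pi * (t - x)) \<noteq> 0"
  shows "((\<lambda>x. of_real (cot (pi * (t - x))) :: complex)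
           has_integral of_real (cot_primitive t v - cot_primitive t u)) {u..v}"
proof -
  have "((\<lambda>x. of_real (cot_primitive t x) :: complex) has_vector_derivative of_real (cot (pi * (t - x))))
          (at x within {u..v})" if "x \<in> {u..v}" for x
    using has_real_derivative_cot_primitive[OF assms(2)[OF that]] by (rule has_vector_derivative_of_real)
  from fundamental_theorem_of_calculus[OF assms(1) this] show ?thesis
    by simp
qed

lemma sin_pi_diff_nonzero_near:
  assumes "t - a \<in> \<int>" and "0 < \<bar>x - a\<bar>" and "\<bar>x - a\<bar> < 1"
  shows "sin (pi * (t - x)) \<noteq> 0"
proof
  assume "sin (pi * (t - x)) = 0"
  then have "t - x \<in> \<int>"
    by (simp add: sin_pi_eq_0_iff)
  with assms(1) have "(t - a) - (t - x) \<in> \<int>"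
    by (rule Ints_diff)
  then have "x - a = 0"
    using assms(3) by (intro Ints_nonzero_abs_less1) simp_all
  with assms(2) show False
    by simp
qed

lemma pv_cot_domain_eq:
  fixes t a e :: real
  assumes "t - a \<in> \<int>" and "0 < e" "e < a" "e < 1 - a"
  shows "{\<tau> \<in> {0..1}. \<forall>k::int. e \<le> \<bar>t - \<tau> - of_int k\<bar>} = {0..a-e} \<union> {a+e..1}"
proof -
  obtain K where K: "t - a = of_int K"
    using assms(1) by (auto elim: Ints_cases)
  have "e \<le> \<bar>t - \<tau> - of_int k\<bar>" if "\<tau> \<in> {0..a-e} \<union> {a+e..1}" for \<tau> k
  proof -
    have dist_a: "e \<le> \<bar>a - \<tau>\<bar>" "\<bar>a - \<tau>\<bar> \<le> 1 - e"
      using that assms by auto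
    have "t - \<tau> - of_int k = (a - \<tau>) + of_int (K - k)"
      using K by simp
    moreover have "K - k = 0 \<or> 1 \<le> \<bar>of_int (K - k) :: real\<bar>"
      by linarith
    ultimately show ?thesis
      using dist_a by auto
  qed
  moreover have "\<tau> \<in> {0..a-e} \<union> {a+e..1}"
    if "\<tau> \<in> {0..1}" and "\<forall>k::int. e \<le> \<bar>t - \<tau> - of_int k\<bar>" for \<tau>
    using that(1) that(2)[rule_format, of K] K by auto
  moreover have "{0..a-e} \<union> {a+e..1} \<subseteq> {0..1}"
    using assms by auto
  ultimately show ?thesis
    by blast
qed

lemma has_integral_cot_excised:
  assumes "t - a \<in> \<int>" and "0 < e" "e < a" "e < 1 - a"
  shows "((\<lambda>x. of_real (cot (pi * (t - x))) :: complex) has_integral 0) ({0..a-e} \<union> {a+e..1})"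
proof -
  let ?P = "cot_primitive t"
  have nonsingular: "sin (pi * (t - x)) \<noteq> 0" if "x \<in> {0..a-e} \<union> {a+e..1}" for x
    using that assms by (intro sin_pi_diff_nonzero_near[of t a]) auto
  have "?P (a - e) = ?P (a + e)"
    using sin_pi_add_int_squared[OF assms(1), of e] sin_pi_add_int_squared[OF assms(1), of "- e"]
    by (simp add: cot_primitive_def algebra_simps)
  moreover have "?P 1 = ?P 0"
    using sin_pi_add_int_squared[of "-1" t] by (simp add: cot_primitive_def algebra_simps)
  ultimately have sum_zero: "of_real (?P (a - e) - ?P 0) + of_real (?P 1 - ?P (a + e)) = (0 :: complex)"
    by (simp flip: of_real_add)
  have "((\<lambda>x. of_real (cot (pi * (t - x))) :: complex) has_integral of_real (?P (a - e) - ?P 0)) {0..a-e}"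
    using nonsingular assms by (intro has_integral_cot) auto
  moreover have "((\<lambda>x. of_real (cot (pi * (t - x))) :: complex) has_integral of_real (?P 1 - ?P (a + e))) {a+e..1}"
    using nonsingular assms by (intro has_integral_cot) auto
  moreover have "{0..a-e} \<inter> {a+e..1} = {}"
    using assms by auto
  ultimately show ?thesis
    using has_integral_Un[of _ _ "{0..a-e}" _ "{a+e..1}"] sum_zero by fastforce
qed

lemma tendsto_integral_excised:
  fixes f :: "real \<Rightarrow> 'a::banach"
  assumes f: "f integrable_on {0..1}" and a: "0 < a" "a < 1"
  shows "((\<lambda>e. integral {0..a-e} f + integral {a+e..1} f) \<longlongrightarrow> integral {0..1} f) (at_right 0)"
proof -
  have "((\<lambda>e. a - e) \<longlongrightarrow> a) (at_right 0)" "((\<lambda>e. a + e) \<longlongrightarrow> a) (at_right 0)"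
    by (auto intro!: tendsto_eq_intros)
  moreover have "\<forall>\<^sub>F e in at_right 0. a - e \<in> {0..1}" "\<forall>\<^sub>F e in at_right 0. a + e \<in> {0..1}"
    using a by (auto intro: eventually_at_rightI[of 0 a] eventually_at_rightI[of 0 "1 - a"])
  ultimately have "((\<lambda>e. integral {0..a-e} f) \<longlongrightarrow> integral {0..a} f) (at_right 0)"
    and "((\<lambda>e. integral {a+e..1} f) \<longlongrightarrow> integral {a..1} f) (at_right 0)"
    using a
    by (auto intro: continuous_on_tendsto_compose[OF indefinite_integral_continuous_1[OF f]]
                    continuous_on_tendsto_compose[OF indefinite_integral_continuous_1'[OF f]])
  from tendsto_add[OF this] show ?thesis
    using Henstock_Kurzweil_Integration.integral_combine[of 0 a 1 f] f a by simp
qed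

lemma pv_cot_trunc_eq_excised:
  assumes "t - a \<in> \<int>" and "0 < e" "e < a" "e < 1 - a"
    and T: "T integrable_on {0..1}"
    and regular: "\<And>x. sin (pi * (t - x)) \<noteq> 0 \<Longrightarrow> of_real (cot (pi * (t - x))) * (f x - f t) = T x"
  shows "pv_cot_trunc t f e = integral {0..a-e} T + integral {a+e..1} T"
proof -
  let ?S = "{0..a-e} \<union> {a+e..1}"
  have disjoint: "{0..a-e} \<inter> {a+e..1} = {}"
    using assms(2-4) by auto
  have "T integrable_on {0..a-e}" "T integrable_on {a+e..1}"
    using assms(2-4) by (auto intro: integrable_on_subinterval[OF T])
  from this[THEN integrable_integral]
  have "(T has_integral integral {0..a-e} T + integral {a+e..1} T) ?S"
    using disjoint by (intro has_integral_Un) simp_all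
  from has_integral_add[OF this has_integral_mult_right[OF has_integral_cot_excised[OF assms(1-4)]]]
  have "((\<lambda>x. T x + f t * of_real (cot (pi * (t - x)))) has_integral
          integral {0..a-e} T + integral {a+e..1} T) ?S"
    by simp
  moreover have "T x + f t * of_real (cot (pi * (t - x))) = of_real (cot (pi * (t - x))) * f x"
    if "x \<in> ?S" for x
  proof -
    have "sin (pi * (t - x)) \<noteq> 0"
      using that assms(1-4) by (intro sin_pi_diff_nonzero_near[of t a]) auto
    from regular[OF this] show ?thesis
      by (simp add: algebra_simps)
  qed
  ultimately have "((\<lambda>x. of_real (cot (pi * (t - x))) * f x) has_integral
                     integral {0..a-e} T + integral {a+e..1} T) ?S"
    by (subst has_integral_cong) auto
  then show ?thesis
    unfolding pv_cot_trunc_def pv_cot_domain_eq[OF assms(1-4)] by (rule integral_unique)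
qed

lemma has_pv_cot_integral_regularized:
  assumes "t \<notin> \<int>" and T: "T integrable_on {0..1}"
    and regular: "\<And>x. sin (pi * (t - x)) \<noteq> 0 \<Longrightarrow> of_real (cot (pi * (t - x))) * (f x - f t) = T x"
  shows "has_pv_cot_integral t f (integral {0..1} T)"
proof -
  define a where "a = t - of_int \<lfloor>t\<rfloor>"
  have "a \<noteq> 0"
  proof
    assume "a = 0"
    then have "t = of_int \<lfloor>t\<rfloor>"
      by (simp add: a_def)
    with assms(1) show False
      by (metis Ints_of_int)
  qed
  then have a: "t - a \<in> \<int>" "0 < a" "a < 1"
    unfolding a_def by (simp_all add: less_le) linarith
  have "\<forall>\<^sub>F e in at_right 0. integral {0..a-e} T + integral {a+e..1} T = pv_cot_trunc t f e"
    using a by (intro eventually_at_rightI[of 0 "min a (1 - a)"])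
      (simp_all add: pv_cot_trunc_eq_excised[OF a(1) _ _ _ T regular])
  with tendsto_integral_excised[OF T a(2,3)] show ?thesis
    unfolding has_pv_cot_integral_def by (rule Lim_transform_eventually)
qed

theorem lemmaB2:
  fixes N :: nat and n :: int and t :: real
  assumes "N > 0"
    and "\<bar>n\<bar> \<le> int N - 1"
    and "t * real N \<notin> \<int>"
  shows "has_pv_cot_integral t (en n)
           ((1 / real N) * (\<Sum>j=1..N. of_real (cot (pi * (t - real j / real N))) * en n (real j / real N))
            - of_real (cot (pi * t * real N)) * en n t)"
proof -
  let ?R = "cot_en_regularized n t"
  have exact: "(?R has_integral of_real (1 / real N) * (\<Sum>j=1..N. ?R (real j / real N))) {0..1}"
    using rectangle_rule_exact_cot_en_regularized[OF assms(1,2)] unfolding rectangle_rule_exact_def .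
  have "t \<notin> \<int>"
    using assms(3) Ints_mult[OF _ Ints_of_nat, of t N] by auto
  from has_pv_cot_integral_regularized[OF this has_integral_integrable[OF exact] cot_mult_en_diff_eq_regularized]
  have "has_pv_cot_integral t (en n) (of_real (1 / real N) * (\<Sum>j=1..N. ?R (real j / real N)))"
    using exact by (simp add: integral_unique)
  then show ?thesis
    unfolding sum_cot_grid_mult_en[OF assms(1,3)] using assms(1) by (simp add: algebra_simps)
qed

end
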